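(* Consider the multilayer probit network model and the pairwise log-likelihood described in the context, with true parameter $\boldsymbol{\omega}^*=(\boldsymbol{\mu}^*,\boldsymbol{\Sigma}^*,\boldsymbol{Z}^* )\in\boldsymbol{\Omega}$ and arbitrary true within-layer edge correlations $r^{(b)}_{i_1j_1,i_2j_2}$. For $\boldsymbol{\omega}=(\boldsymbol{\Theta},\boldsymbol{Z})$ with $\boldsymbol{\Theta}=(\boldsymbol{\mu},\boldsymbol{\Sigma})$, let $$\boldsymbol{e}(\boldsymbol{\omega}^*,\boldsymbol{\omega})=\frac{1}{N^2M^2}\sum_{k,l\in[K]}\mathbb{E}\big(\mathcal{L}_{kl}(\boldsymbol{\Theta}^*,\boldsymbol{Z}^* )-\mathcal{L}_{kl}(\boldsymbol{\Theta},\boldsymbol{Z})\big),$$ where the expectation is taken under the true model. Then $\boldsymbol{e}(\boldsymbol{\omega}^*,\boldsymbol{\omega})\ge 0$ for every $\boldsymbol{\omega}\in\boldsymbol{\Omega}$.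
   Context: Multilayer probit network model: there are $N$ nodes, $M$ layers and $K$ communities. Each node $i$ has a community label $e_i\in[K]$, encoded by $\boldsymbol{Z}\in\{0,1\}^{N\times K}$ with $Z_{ik}=1$ iff $e_i=k$. Layer $b$ has a symmetric adjacency matrix $\boldsymbol{A}^{(b)}\in\{0,1\}^{N\times N}$. For $i<j$ and $b\in[M]$, $A^{(b)}_{ij}=\mathbb{I}\{\mu^{(b)}_{e_ie_j}+\varepsilon^{(b)}_{ij}>0\}$, where $\boldsymbol{\varepsilon}_{ij}=(\varepsilon^{(1)}_{ij},\dots,\varepsilon^{(M)}_{ij})^\top\sim N(0,\boldsymbol{\Sigma}_{e_ie_j})$, $\boldsymbol{\Sigma}_{kl}=(\Sigma^{(bd)}_{kl})_{b,d\in[M]}$ is positive definite with all diagonal entries equal to $1$, the vectors $\boldsymbol{\varepsilon}_{ij}$ are jointly Gaussian, and $\operatorname{corr}(\boldsymbol{\varepsilon}_{i_1j_1},\boldsymbol{\varepsilon}_{i_2j_2})=\operatorname{diag}(r^{(1)}_{i_1j_1,i_2j_2},\dots,r^{(M)}_{i_1j_1,i_2j_2})$ with $r^{(b)}_{i_1j_1,i_2j_2}\in[-1,1]$ (within-layer edge dependence). Write $\boldsymbol{\mu}=(\mu^{(b)}_{kl})$, $\boldsymbol{\Sigma}=(\Sigma^{(bd)}_{kl})$, $\boldsymbol{\Theta}=(\boldsymbol{\mu},\boldsymbol{\Sigma})$, $\boldsymbol{\Theta}^{(bd)}_{kl}=(\mu^{(b)}_{kl},\mu^{(d)}_{kl},\Sigma^{(bd)}_{kl})$.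 Pairwise likelihood: let $\Phi$ be the standard normal CDF and $\Phi_2(x,y,\sigma)$ the CDF at $(x,y)$ of the bivariate centered normal with unit variances and correlation $\sigma$. Define $\alpha_1=\Phi_2(\mu^{(b)}_{kl},\mu^{(d)}_{kl},\Sigma^{(bd)}_{kl})$, $\alpha_2=\Phi(\mu^{(b)}_{kl})-\alpha_1$, $\alpha_3=\Phi(\mu^{(d)}_{kl})-\alpha_1$, $\alpha_4=1-\Phi(\mu^{(b)}_{kl})-\Phi(\mu^{(d)}_{kl})+\alpha_1$ (all as functions of $\boldsymbol{\Theta}^{(bd)}_{kl}$). Then $\mathcal{L}_{kl}(\boldsymbol{\Theta},\boldsymbol{Z})=\sum_{i<j}\sum_{b<d}Z_{ik}Z_{jl}\{A^{(b)}_{ij}A^{(d)}_{ij}\log\alpha_1+A^{(b)}_{ij}(1-A^{(d)}_{ij})\log\alpha_2+(1-A^{(b)}_{ij})A^{(d)}_{ij}\log\alpha_3+(1-A^{(b)}_{ij})(1-A^{(d)}_{ij})\log\alpha_4\}$ and $\mathcal{L}=\sum_{k,l}\mathcal{L}_{kl}$. Parameter space: for each $k,l$, $T_{kl}\subseteq[M]\times[M]$ is a known set with $|T_{kl}|=s^*_{kl}+M$, and $\mathcal{S}_{kl}$ is either $\{X\in\mathbb{R}^{M\times M}: X\succ0,\ \operatorname{diag}(X)=\mathbf{1}_M,\ \operatorname{Supp}(X)=T_{kl}\}$ or $\{X\succ 0:\operatorname{diag}(X)=\mathbf{1}_M,\ \operatorname{Supp}(X^{-1})=T_{kl}\}$.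 With constants $c_l<1<c_u$, a sparsity level $\rho_{N,M}\in(0,1)$ and $D_{N,M}<1$, $\boldsymbol{\Omega}=\{\boldsymbol{\omega}=(\boldsymbol{\mu},\boldsymbol{\Sigma},\boldsymbol{Z}): \boldsymbol{Z}\in\{0,1\}^{N\times K},\ \boldsymbol{Z}\mathbf{1}_K=\mathbf{1}_N,\ c_l\rho_{N,M}\le\Phi(\mu^{(b)}_{kl})\le c_u\rho_{N,M},\ \boldsymbol{\Sigma}_{kl}\in\mathcal{S}_{kl},\ \sup_{k,l}\|\operatorname{ndiag}(\boldsymbol{\Sigma}_{kl})\|_{\max}\le D_{N,M}\}$, where $\operatorname{ndiag}(Y)=Y-\operatorname{diag}(Y)$ and $\|\cdot\|_{\max}$ is the maximal absolute entry. *)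

theory Defs
  imports "HOL-Probability.Probability"
begin

text \<open>Nodes are 0..N-1, layers 0..M-1, communities 0..K-1.
  Parameters: mu b k l = mu^(b)_kl ; Sig b d k l = Sigma^(bd)_kl ; Z i k = Z_ik.\<close>

definition Phi :: "real \<Rightarrow> real" where
  "Phi x = measure (density lborel (\<lambda>t. ennreal (std_normal_density t))) {..x}"

definition binormal_density :: "real \<Rightarrow> real \<times> real \<Rightarrow> real" where
  "binormal_density s p =
     exp (- ((fst p)\<^sup>2 - 2 * s * fst p * snd p + (snd p)\<^sup>2) / (2 * (1 - s\<^sup>2)))
     / (2 * pi * sqrt (1 - s\<^sup>2))"

definition Phi2 :: "real \<Rightarrow> real \<Rightarrow> real \<Rightarrow> real" where
  "Phi2 x y s = measure (density lborel (\<lambda>p. ennreal (binormal_density s p))) ({..x} \<times> {..y})"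

definition alpha1 :: "real \<Rightarrow> real \<Rightarrow> real \<Rightarrow> real" where
  "alpha1 mb md s = Phi2 mb md s"
definition alpha2 :: "real \<Rightarrow> real \<Rightarrow> real \<Rightarrow> real" where
  "alpha2 mb md s = Phi mb - Phi2 mb md s"
definition alpha3 :: "real \<Rightarrow> real \<Rightarrow> real \<Rightarrow> real" where
  "alpha3 mb md s = Phi md - Phi2 mb md s"
definition alpha4 :: "real \<Rightarrow> real \<Rightarrow> real \<Rightarrow> real" where
  "alpha4 mb md s = 1 - Phi mb - Phi md + Phi2 mb md s"

definition Lkl :: "nat \<Rightarrow> nat \<Rightarrow> (nat \<Rightarrow> nat \<Rightarrow> nat \<Rightarrow> real) \<Rightarrow>
    (nat \<Rightarrow> nat \<Rightarrow> nat \<Rightarrow> nat \<Rightarrow> real) \<Rightarrow> (nat \<Rightarrow> nat \<Rightarrow> real) \<Rightarrow>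
    (nat \<Rightarrow> nat \<Rightarrow> nat \<Rightarrow> real) \<Rightarrow> nat \<Rightarrow> nat \<Rightarrow> real" where
  "Lkl N M mu Sig Z A k l =
    (\<Sum>i<N. \<Sum>j\<in>{i<..<N}. \<Sum>b<M. \<Sum>d\<in>{b<..<M}.
      Z i k * Z j l *
       (A b i j * A d i j * ln (alpha1 (mu b k l) (mu d k l) (Sig b d k l))
        + A b i j * (1 - A d i j) * ln (alpha2 (mu b k l) (mu d k l) (Sig b d k l))
        + (1 - A b i j) * A d i j * ln (alpha3 (mu b k l) (mu d k l) (Sig b d k l))
        + (1 - A b i j) * (1 - A d i j) * ln (alpha4 (mu b k l) (mu d k l) (Sig b d k l))))"

definition comm :: "nat \<Rightarrow> (nat \<Rightarrow> nat \<Rightarrow> real) \<Rightarrow> nat \<Rightarrow> nat" where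
  "comm K Z i = (THE k. k < K \<and> Z i k = 1)"

definition Adj :: "nat \<Rightarrow> (nat \<Rightarrow> nat \<Rightarrow> nat \<Rightarrow> real) \<Rightarrow> (nat \<Rightarrow> nat \<Rightarrow> real) \<Rightarrow>
    (nat \<Rightarrow> nat \<Rightarrow> nat \<Rightarrow> 'w \<Rightarrow> real) \<Rightarrow> 'w \<Rightarrow> nat \<Rightarrow> nat \<Rightarrow> nat \<Rightarrow> real" where
  "Adj K mu Z eps w b i j =
     (if i < j then (if mu b (comm K Z i) (comm K Z j) + eps i j b w > 0 then 1 else 0)
      else if j < i then (if mu b (comm K Z j) (comm K Z i) + eps j i b w > 0 then 1 else 0)
      else 0)"

definition supp_mat :: "nat \<Rightarrow> (nat \<Rightarrow> nat \<Rightarrow> real) \<Rightarrow> (nat \<times> nat) set" where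
  "supp_mat M X = {(b, d). b < M \<and> d < M \<and> X b d \<noteq> 0}"

definition pos_def :: "nat \<Rightarrow> (nat \<Rightarrow> nat \<Rightarrow> real) \<Rightarrow> bool" where
  "pos_def M X \<longleftrightarrow> (\<forall>b<M. \<forall>d<M. X b d = X d b) \<and>
     (\<forall>x::nat \<Rightarrow> real. (\<exists>b<M. x b \<noteq> 0) \<longrightarrow> (\<Sum>b<M. \<Sum>d<M. x b * X b d * x d) > 0)"

definition is_inverse :: "nat \<Rightarrow> (nat \<Rightarrow> nat \<Rightarrow> real) \<Rightarrow> (nat \<Rightarrow> nat \<Rightarrow> real) \<Rightarrow> bool" where
  "is_inverse M X Y \<longleftrightarrow> (\<forall>b<M. \<forall>d<M. (\<Sum>c<M. X b c * Y c d) = (if b = d then 1 else 0))"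

definition in_S :: "nat \<Rightarrow> (nat \<times> nat) set \<Rightarrow> bool \<Rightarrow> (nat \<Rightarrow> nat \<Rightarrow> real) \<Rightarrow> bool" where
  "in_S M T inv_supp X \<longleftrightarrow> pos_def M X \<and> (\<forall>b<M. X b b = 1) \<and>
     (if inv_supp then (\<exists>Y. is_inverse M X Y \<and> supp_mat M Y = T) else supp_mat M X = T)"

definition Omega :: "nat \<Rightarrow> nat \<Rightarrow> nat \<Rightarrow> real \<Rightarrow> real \<Rightarrow> real \<Rightarrow> real \<Rightarrow>
    (nat \<Rightarrow> nat \<Rightarrow> (nat \<times> nat) set) \<Rightarrow> (nat \<Rightarrow> nat \<Rightarrow> bool) \<Rightarrow>
    (nat \<Rightarrow> nat \<Rightarrow> nat \<Rightarrow> real) \<Rightarrow> (nat \<Rightarrow> nat \<Rightarrow> nat \<Rightarrow> nat \<Rightarrow> real) \<Rightarrow>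
    (nat \<Rightarrow> nat \<Rightarrow> real) \<Rightarrow> bool" where
  "Omega N M K cl cu rho D T inv_supp mu Sig Z \<longleftrightarrow>
     (\<forall>i<N. \<forall>k<K. Z i k = 0 \<or> Z i k = 1) \<and>
     (\<forall>i<N. (\<Sum>k<K. Z i k) = 1) \<and>
     (\<forall>b<M. \<forall>k<K. \<forall>l<K. cl * rho \<le> Phi (mu b k l) \<and> Phi (mu b k l) \<le> cu * rho) \<and>
     (\<forall>k<K. \<forall>l<K. in_S M (T k l) (inv_supp k l) (\<lambda>b d. Sig b d k l)) \<and>
     (\<forall>k<K. \<forall>l<K. \<forall>b<M. \<forall>d<M. b \<noteq> d \<longrightarrow> \<bar>Sig b d k l\<bar> \<le> D)"

definition excess :: "'w measure \<Rightarrow> nat \<Rightarrow> nat \<Rightarrow> nat \<Rightarrow>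
    (nat \<Rightarrow> nat \<Rightarrow> nat \<Rightarrow> 'w \<Rightarrow> real) \<Rightarrow>
    (nat \<Rightarrow> nat \<Rightarrow> nat \<Rightarrow> real) \<Rightarrow> (nat \<Rightarrow> nat \<Rightarrow> nat \<Rightarrow> nat \<Rightarrow> real) \<Rightarrow> (nat \<Rightarrow> nat \<Rightarrow> real) \<Rightarrow>
    (nat \<Rightarrow> nat \<Rightarrow> nat \<Rightarrow> real) \<Rightarrow> (nat \<Rightarrow> nat \<Rightarrow> nat \<Rightarrow> nat \<Rightarrow> real) \<Rightarrow> (nat \<Rightarrow> nat \<Rightarrow> real) \<Rightarrow> real" where
  "excess P N M K eps mu0 Sig0 Z0 mu Sig Z =
     1 / (real N ^ 2 * real M ^ 2) *
     (\<Sum>k<K. \<Sum>l<K. integral\<^sup>L P (\<lambda>w.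
        Lkl N M mu0 Sig0 Z0 (Adj K mu0 Z0 eps w) k l - Lkl N M mu Sig Z (Adj K mu0 Z0 eps w) k l))"

end

theory Submission
  imports Defs
begin

text \<open>Under the true model the pair (A^(b)_ij, A^(d)_ij) falls into its four cells with
  probabilities alpha_1, ..., alpha_4 evaluated at the true parameters: the bivariate normal law
  is invariant under p -> -p, so P(mu_b + eps_b > 0, mu_d + eps_d > 0) = Phi_2(mu_b, mu_d, sigma).
  Hence the expected pairwise log-likelihood of a pair is sum_r p_r ln q_r, with p the true and
  q the fitted cell probabilities, all positive because the normal density is. Collapsing the
  sums over k, l onto the community labels, the excess risk becomes a sum over pairs i < j, b < d
  of sum_r p_r ln p_r - sum_r p_r ln q_r, each nonnegative by Gibbs' inequality.\<close>

section \<open>Lebesgue measure on the plane\<close>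

lemma emeasure_density_vimage_eq:
  assumes h: "h \<in> measurable M M" "distr M M h = M"
    and f: "f \<in> borel_measurable M" "\<And>x. x \<in> space M \<Longrightarrow> f (h x) = f x"
    and S: "S \<in> sets M"
  shows "emeasure (density M f) (h -` S \<inter> space M) = emeasure (density M f) S"
proof -
  have "density M f = distr (density M (\<lambda>x. f (h x))) M h"
    using density_distr[OF f(1) h(1)] h(2) by simp
  also have "density M (\<lambda>x. f (h x)) = density M f"
    using f h(1) by (intro density_cong) (auto intro: measurable_compose)
  finally have "emeasure (density M f) S = emeasure (distr (density M f) M h) S"
    by (rule arg_cong)
  also have "\<dots> = emeasure (density M f) (h -` S \<inter> space M)"
    using h S by (subst emeasure_distr) auto
  finally show ?thesis ..
qed

lemma distr_lborel_uminus: "distr lborel lborel uminus = (lborel :: (real \<times> real) measure)"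
proof -
  have "distr lborel lborel uminus = distr lborel borel (\<lambda>x::real \<times> real. 0 + (-1) *\<^sub>R x)"
    by (intro distr_cong) auto
  then show ?thesis
    using lborel_affine[of "-1::real" "0::real \<times> real"] by (simp add: density_1)
qed

lemma distr_lborel_swap: "distr lborel lborel prod.swap = (lborel :: (real \<times> real) measure)"
proof -
  have "prod.swap = (\<lambda>(x :: real, y :: real). (y, x))" by auto
  moreover have "(lborel :: (real \<times> real) measure) = distr lborel lborel (\<lambda>(x, y). (y, x))"
    using lborel_pair.distr_pair_swap[where ?'a = real and ?'b = real] unfolding lborel_prod .
  ultimately show ?thesis by simp
qed

lemma borel_measurable_swap:
  "prod.swap \<in> borel_measurable (borel :: ('a::topological_space \<times> 'b::topological_space) measure)"
  by (intro borel_measurable_continuous_onI continuous_on_swap)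

lemma emeasure_lborel_Times_ne_0:
  fixes A B :: "real set"
  assumes "A \<in> sets borel" "B \<in> sets borel" "emeasure lborel A \<noteq> 0" "emeasure lborel B \<noteq> 0"
  shows "emeasure lborel (A \<times> B) \<noteq> 0"
  using lborel.emeasure_pair_measure_Times[of A lborel B] assms by (simp add: lborel_prod)

lemma emeasure_lborel_atMost_ne_0: "emeasure lborel {..a :: real} \<noteq> 0"
proof -
  have "emeasure lborel {a - 1..a} \<le> emeasure lborel {..a}" by (intro emeasure_mono) auto
  then show ?thesis by auto
qed

lemma emeasure_lborel_greaterThan_ne_0: "emeasure lborel {a :: real<..} \<noteq> 0"
proof -
  have "emeasure lborel {a + 1..a + 2} \<le> emeasure lborel {a<..}" by (intro emeasure_mono) auto
  then show ?thesis by auto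
qed

section \<open>Bivariate normal distribution\<close>

definition binormal_measure :: "real \<Rightarrow> (real \<times> real) measure" where
  "binormal_measure s = density lborel (\<lambda>p. ennreal (binormal_density s p))"

lemma sets_binormal_measure [simp, measurable_cong]: "sets (binormal_measure s) = sets borel"
  by (simp add: binormal_measure_def)

lemma space_binormal_measure [simp]: "space (binormal_measure s) = UNIV"
  by (simp add: binormal_measure_def)

lemma binormal_density_eq_mult_normal_density:
  assumes "\<bar>s\<bar> < 1"
  shows "binormal_density s (x, y)
    = std_normal_density x * normal_density (s * x) (sqrt (1 - s\<^sup>2)) y"
proof -
  have s2: "0 < 1 - s\<^sup>2" using assms by (simp add: abs_square_less_1)
  have "- (x\<^sup>2 - 2 * s * x * y + y\<^sup>2) / (2 * (1 - s\<^sup>2))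
      = - x\<^sup>2 / 2 + - (y - s * x)\<^sup>2 / (2 * (1 - s\<^sup>2))"
    using s2 by (simp add: field_simps power2_eq_square)
  then have "exp (- (x\<^sup>2 - 2 * s * x * y + y\<^sup>2) / (2 * (1 - s\<^sup>2)))
      = exp (- x\<^sup>2 / 2) * exp (- (y - s * x)\<^sup>2 / (2 * (1 - s\<^sup>2)))"
    by (simp only: exp_add)
  moreover have "sqrt (2 * pi * (sqrt (1 - s\<^sup>2))\<^sup>2) = sqrt (2 * pi) * sqrt (1 - s\<^sup>2)"
    using s2 by (simp add: real_sqrt_mult)
  ultimately show ?thesis
    unfolding binormal_density_def normal_density_def fst_conv snd_conv
    using s2 by (simp add: field_simps real_sqrt_mult)
qed

lemma binormal_density_pos: "\<bar>s\<bar> < 1 \<Longrightarrow> 0 < binormal_density s p"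
  using binormal_density_eq_mult_normal_density[of s "fst p" "snd p"]
  by (simp add: abs_square_less_1 normal_density_pos)

lemma binormal_density_swap: "binormal_density s (prod.swap p) = binormal_density s p"
  by (simp add: binormal_density_def algebra_simps)

lemma binormal_density_uminus: "binormal_density s (- p) = binormal_density s p"
  by (simp add: binormal_density_def)

lemma borel_measurable_binormal_density [measurable]:
  "\<bar>s\<bar> < 1 \<Longrightarrow> binormal_density s \<in> borel_measurable borel"
  unfolding binormal_density_def[abs_def]
  by (intro borel_measurable_continuous_onI continuous_intros) (auto simp: power2_eq_1_iff)

lemma emeasure_binormal_measure_vimage_uminus:
  "\<bar>s\<bar> < 1 \<Longrightarrow> S \<in> sets borel \<Longrightarrow>
    emeasure (binormal_measure s) (uminus -` S) = emeasure (binormal_measure s) S"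
  using emeasure_density_vimage_eq[of uminus lborel "\<lambda>p. ennreal (binormal_density s p)" S]
  by (simp add: binormal_measure_def distr_lborel_uminus binormal_density_uminus)

lemma emeasure_binormal_measure_vimage_swap:
  "\<bar>s\<bar> < 1 \<Longrightarrow> S \<in> sets borel \<Longrightarrow>
    emeasure (binormal_measure s) (prod.swap -` S) = emeasure (binormal_measure s) S"
  using emeasure_density_vimage_eq[of prod.swap lborel "\<lambda>p. ennreal (binormal_density s p)" S]
  by (simp add: binormal_measure_def distr_lborel_swap binormal_density_swap borel_measurable_swap)

lemma emeasure_binormal_measure_Times_UNIV:
  assumes s: "\<bar>s\<bar> < 1" and A: "A \<in> sets borel"
  shows "emeasure (binormal_measure s) (A \<times> UNIV) = emeasure std_normal_distribution A"
proof -
  have sd: "0 < sqrt (1 - s\<^sup>2)" using s by (simp add: abs_square_less_1)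
  have AU[measurable]: "A \<times> UNIV \<in> sets (borel :: (real \<times> real) measure)"
    using A by (simp add: borel_Times)
  have fiber: "(\<integral>\<^sup>+ y. ennreal (binormal_density s (x, y)) * indicator (A \<times> UNIV) (x, y) \<partial>lborel)
      = ennreal (std_normal_density x) * indicator A x" for x
  proof -
    have "(\<integral>\<^sup>+ y. ennreal (binormal_density s (x, y)) * indicator (A \<times> UNIV) (x, y) \<partial>lborel)
        = (\<integral>\<^sup>+ y. (ennreal (std_normal_density x) * indicator A x)
             * ennreal (normal_density (s * x) (sqrt (1 - s\<^sup>2)) y) \<partial>lborel)"
      by (intro nn_integral_cong)
        (simp add: binormal_density_eq_mult_normal_density[OF s] ennreal_mult' indicator_def)
    also have "\<dots> = ennreal (std_normal_density x) * indicator A x"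
      using sd by (simp add: nn_integral_cmult nn_integral_eq_integral)
    finally show ?thesis .
  qed
  have "emeasure (binormal_measure s) (A \<times> UNIV)
      = (\<integral>\<^sup>+ p. ennreal (binormal_density s p) * indicator (A \<times> UNIV) p \<partial>lborel)"
    unfolding binormal_measure_def using s by (subst emeasure_density) auto
  also have "\<dots> = (\<integral>\<^sup>+ p. ennreal (binormal_density s p) * indicator (A \<times> UNIV) p
      \<partial>(lborel \<Otimes>\<^sub>M lborel))"
    by (simp add: lborel_prod)
  also have "\<dots> = (\<integral>\<^sup>+ x. \<integral>\<^sup>+ y. ennreal (binormal_density s (x, y)) * indicator (A \<times> UNIV) (x, y)
      \<partial>lborel \<partial>lborel)"
    using s by (intro lborel.nn_integral_fst[symmetric]) (simp add: lborel_prod)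
  also have "\<dots> = emeasure std_normal_distribution A"
    using A by (simp add: fiber emeasure_density)
  finally show ?thesis .
qed

lemma emeasure_binormal_measure_UNIV_Times:
  assumes s: "\<bar>s\<bar> < 1" and A: "A \<in> sets borel"
  shows "emeasure (binormal_measure s) (UNIV \<times> A) = emeasure std_normal_distribution A"
proof -
  have "emeasure (binormal_measure s) (UNIV \<times> A)
      = emeasure (binormal_measure s) (prod.swap -` (A \<times> UNIV))"
    by (intro arg_cong[where f = "emeasure _"]) auto
  also have "\<dots> = emeasure (binormal_measure s) (A \<times> UNIV)"
    using A by (intro emeasure_binormal_measure_vimage_swap[OF s]) (simp add: borel_Times)
  finally show ?thesis
    using emeasure_binormal_measure_Times_UNIV[OF s A] by simp
qed

lemma prob_space_binormal_measure: "\<bar>s\<bar> < 1 \<Longrightarrow> prob_space (binormal_measure s)"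
  using emeasure_binormal_measure_Times_UNIV[of s UNIV]
    prob_space.emeasure_space_1[OF prob_space_normal_density[of 1 0]]
  by (intro prob_spaceI) simp

lemma Phi_eq_measure_binormal_measure:
  assumes "\<bar>s\<bar> < 1"
  shows "Phi a = measure (binormal_measure s) ({..a} \<times> UNIV)"
    and "Phi a = measure (binormal_measure s) (UNIV \<times> {..a})"
  using assms
  by (simp_all add: Phi_def measure_def
      emeasure_binormal_measure_Times_UNIV emeasure_binormal_measure_UNIV_Times)

lemma AE_binormal_measure_off_axes:
  assumes s: "\<bar>s\<bar> < 1"
  shows "AE p in binormal_measure s. fst p \<noteq> a \<and> snd p \<noteq> c"
proof -
  have "AE p in lborel \<Otimes>\<^sub>M lborel. fst p \<noteq> a \<and> snd p \<noteq> c"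
    using AE_lborel_singleton[of a] AE_lborel_singleton[of c]
    by (intro lborel_pair.AE_pair_measure) (measurable, auto elim: eventually_mono)
  then show ?thesis
    unfolding binormal_measure_def lborel_prod
    using s by (subst AE_density) (auto elim: eventually_mono)
qed

lemma measure_binormal_measure_pos:
  assumes s: "\<bar>s\<bar> < 1" and S: "S \<in> sets borel" and "emeasure lborel S \<noteq> 0"
  shows "0 < measure (binormal_measure s) S"
proof -
  interpret prob_space "binormal_measure s" using prob_space_binormal_measure[OF s] .
  have "S \<notin> null_sets (binormal_measure s)"
  proof
    assume "S \<in> null_sets (binormal_measure s)"
    then have "AE p in lborel. p \<in> S \<longrightarrow> ennreal (binormal_density s p) = 0"
      unfolding binormal_measure_def using s by (simp add: null_sets_density_iff)
    then have "AE p in lborel. p \<notin> S"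
      by (elim eventually_mono) (metis binormal_density_pos[OF s] ennreal_eq_0_iff not_le)
    then have "S \<in> null_sets lborel" using S by (simp add: AE_iff_null_sets)
    with assms show False by auto
  qed
  then show ?thesis
    using S by (simp add: null_sets_def emeasure_eq_measure zero_less_measure_iff)
qed

lemma alpha_eq_measure_binormal_measure:
  assumes s: "\<bar>s\<bar> < 1"
  shows "alpha1 a c s = measure (binormal_measure s) ({..a} \<times> {..c})"
    and "alpha2 a c s = measure (binormal_measure s) ({..a} \<times> {c<..})"
    and "alpha3 a c s = measure (binormal_measure s) ({a<..} \<times> {..c})"
    and "alpha4 a c s = measure (binormal_measure s) ({a<..} \<times> {c<..})"
proof -
  interpret Q: prob_space "binormal_measure s" using prob_space_binormal_measure[OF s] .
  let ?q = "\<lambda>A B. measure (binormal_measure s) (A \<times> B)"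
  have split_snd: "?q A UNIV = ?q A {..c} + ?q A {c<..}" if "A \<in> sets borel" for A
  proof -
    have "A \<times> UNIV = A \<times> {..c} \<union> A \<times> {c<..}" by auto
    then show ?thesis
      using that by (simp only:) (intro Q.finite_measure_Union; auto simp: borel_Times)
  qed
  have split_fst: "?q UNIV B = ?q {..a} B + ?q {a<..} B" if "B \<in> sets borel" for B
  proof -
    have "UNIV \<times> B = {..a} \<times> B \<union> {a<..} \<times> B" by auto
    then show ?thesis
      using that by (simp only:) (intro Q.finite_measure_Union; auto simp: borel_Times)
  qed
  have alpha1: "alpha1 a c s = ?q {..a} {..c}"
    by (simp add: alpha1_def Phi2_def binormal_measure_def)
  have "Phi a = ?q {..a} UNIV" "Phi c = ?q UNIV {..c}" "1 = ?q UNIV UNIV"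
    using Phi_eq_measure_binormal_measure[OF s] Q.prob_space by simp_all
  then show "alpha1 a c s = ?q {..a} {..c}" "alpha2 a c s = ?q {..a} {c<..}"
    "alpha3 a c s = ?q {a<..} {..c}" "alpha4 a c s = ?q {a<..} {c<..}"
    using alpha1 split_snd[of "{..a}"] split_snd[of "{a<..}"] split_snd[of UNIV]
      split_fst[of "{..c}"] split_fst[of UNIV]
    by (simp_all add: alpha2_def alpha3_def alpha4_def alpha1_def)
qed

lemma alpha_pos:
  assumes "\<bar>s\<bar> < 1"
  shows "0 < alpha1 a c s" "0 < alpha2 a c s" "0 < alpha3 a c s" "0 < alpha4 a c s"
  unfolding alpha_eq_measure_binormal_measure[OF assms]
  by (intro measure_binormal_measure_pos[OF assms] borel_Times emeasure_lborel_Times_ne_0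
        emeasure_lborel_atMost_ne_0 emeasure_lborel_greaterThan_ne_0; simp)+

lemma alpha_sum: "alpha1 a c s + alpha2 a c s + alpha3 a c s + alpha4 a c s = 1"
  by (simp add: alpha1_def alpha2_def alpha3_def alpha4_def)

section \<open>Probit pairs\<close>

lemma measure_probit_event:
  assumes s: "\<bar>s\<bar> < 1"
    and d: "distributed P lborel (\<lambda>w. (X w, Y w)) (\<lambda>p. ennreal (binormal_density s p))"
  shows "measure P {w \<in> space P. (0 < a + X w) = u \<and> (0 < c + Y w) = v}
    = measure (binormal_measure s) ((if u then {..a} else {a<..}) \<times> (if v then {..c} else {c<..}))"
proof -
  let ?E = "(if u then {..<a} else {a..}) \<times> (if v then {..<c} else {c..})"
  have E: "?E \<in> sets borel" by (simp add: borel_Times)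
  have "(uminus :: real \<times> real \<Rightarrow> _) \<in> borel_measurable borel"
    by (intro borel_measurable_continuous_onI continuous_intros)
  from measurable_sets[OF this E] have E': "uminus -` ?E \<in> sets borel"
    by simp
  have XY: "(\<lambda>w. (X w, Y w)) \<in> measurable P lborel"
    "distr P lborel (\<lambda>w. (X w, Y w)) = binormal_measure s"
    using d by (simp_all add: distributed_def binormal_measure_def)
  have "measure P {w \<in> space P. (0 < a + X w) = u \<and> (0 < c + Y w) = v}
      = measure P ((\<lambda>w. (X w, Y w)) -` (uminus -` ?E) \<inter> space P)"
    by (intro arg_cong[where f = "measure P"]) auto
  also have "\<dots> = measure (binormal_measure s) (uminus -` ?E)"
    using measure_distr[OF XY(1), of "uminus -` ?E"] XY(2) E' by simp
  also have "\<dots> = measure (binormal_measure s) ?E"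
    using emeasure_binormal_measure_vimage_uminus[OF s E] by (simp add: measure_def)
  also have "\<dots>
      = measure (binormal_measure s) ((if u then {..a} else {a<..}) \<times> (if v then {..c} else {c<..}))"
    using E by (intro measure_eq_AE eventually_mono[OF AE_binormal_measure_off_axes[OF s, of a c]])
      (auto simp: borel_Times split: if_splits)
  finally show ?thesis .
qed

lemma (in finite_measure) has_bochner_integral_fun_of_finite:
  fixes U :: "'a \<Rightarrow> 'b :: finite" and g :: "'b \<Rightarrow> real"
  assumes "U \<in> measurable M (count_space UNIV)"
  shows "has_bochner_integral M (\<lambda>x. g (U x)) (\<Sum>u\<in>UNIV. g u * measure M {x \<in> space M. U x = u})"
proof -
  have "{x \<in> space M. U x = u} \<in> sets M" for u
    using assms by measurable
  then have "has_bochner_integral M (\<lambda>x. \<Sum>u\<in>UNIV. g u * indicator {x \<in> space M. U x = u} x)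
      (\<Sum>u\<in>UNIV. g u * measure M {x \<in> space M. U x = u})"
    by (intro has_bochner_integral_sum has_bochner_integral_mult_right
        has_bochner_integral_real_indicator)
      (auto simp: top.not_eq_extremum[symmetric])
  then show ?thesis
    by (rule has_bochner_integral_cong[THEN iffD1, rotated -1]) (auto simp: indicator_def)
qed

definition pair_loglik :: "real \<Rightarrow> real \<Rightarrow> real \<Rightarrow> real \<Rightarrow> real \<Rightarrow> real" where
  "pair_loglik mb md s x y =
     x * y * ln (alpha1 mb md s) + x * (1 - y) * ln (alpha2 mb md s)
     + (1 - x) * y * ln (alpha3 mb md s) + (1 - x) * (1 - y) * ln (alpha4 mb md s)"

definition expected_pair_loglik :: "real \<Rightarrow> real \<Rightarrow> real \<Rightarrow> real \<Rightarrow> real \<Rightarrow> real \<Rightarrow> real" where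
  "expected_pair_loglik a c s mb md t =
     alpha1 a c s * ln (alpha1 mb md t) + alpha2 a c s * ln (alpha2 mb md t)
     + alpha3 a c s * ln (alpha3 mb md t) + alpha4 a c s * ln (alpha4 mb md t)"

lemma has_bochner_integral_pair_loglik:
  assumes P: "prob_space P" and s: "\<bar>s\<bar> < 1"
    and d: "distributed P lborel (\<lambda>w. (X w, Y w)) (\<lambda>p. ennreal (binormal_density s p))"
  shows "has_bochner_integral P
    (\<lambda>w. pair_loglik mb md t (if 0 < a + X w then 1 else 0) (if 0 < c + Y w then 1 else 0))
    (expected_pair_loglik a c s mb md t)"
proof -
  interpret prob_space P by (rule P)
  have "(\<lambda>w. (X w, Y w)) \<in> measurable P (lborel \<Otimes>\<^sub>M lborel)"
    using d by (simp add: distributed_def lborel_prod)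
  then have [measurable]: "X \<in> borel_measurable P" "Y \<in> borel_measurable P"
    by (simp_all add: measurable_pair_iff comp_def)
  have univ:
    "(UNIV :: (bool \<times> bool) set) = {(True, True), (True, False), (False, True), (False, False)}"
    by auto
  let ?U = "\<lambda>w. (0 < a + X w, 0 < c + Y w)"
  let ?g = "\<lambda>p. pair_loglik mb md t (of_bool (fst p)) (of_bool (snd p))"
  have "?U \<in> measurable P (count_space UNIV)"
    by measurable
  from has_bochner_integral_fun_of_finite[OF this, of ?g]
  have "has_bochner_integral P (\<lambda>w. ?g (?U w))
      (\<Sum>p\<in>UNIV. ?g p * measure P {w \<in> space P. (0 < a + X w) = fst p \<and> (0 < c + Y w) = snd p})"
    by (simp add: prod_eq_iff)
  then show ?thesis
    unfolding univ
    by (simp add: measure_probit_event[OF s d] alpha_eq_measure_binormal_measure[OF s, symmetric]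
        pair_loglik_def expected_pair_loglik_def of_bool_def ac_simps)
qed

lemma mult_ln_diff_le: "0 < (p :: real) \<Longrightarrow> 0 < q \<Longrightarrow> p * ln q - p * ln p \<le> q - p"
proof -
  assume pq: "0 < p" "0 < q"
  then have "p * (ln q - ln p) = p * ln (q / p)" by (simp add: ln_div)
  also have "\<dots> \<le> p * (q / p - 1)" using pq by (intro mult_left_mono ln_le_minus_one) auto
  also have "\<dots> = q - p" using pq by (simp add: field_simps)
  finally show ?thesis by (simp add: right_diff_distrib)
qed

definition probit_pair_kl :: "real \<Rightarrow> real \<Rightarrow> real \<Rightarrow> real \<Rightarrow> real \<Rightarrow> real \<Rightarrow> real" where
  "probit_pair_kl a c s mb md t =
     expected_pair_loglik a c s a c s - expected_pair_loglik a c s mb md t"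

lemma probit_pair_kl_nonneg:
  assumes "\<bar>s\<bar> < 1" "\<bar>t\<bar> < 1"
  shows "0 \<le> probit_pair_kl a c s mb md t"
  using mult_ln_diff_le[of "alpha1 a c s" "alpha1 mb md t"]
    mult_ln_diff_le[of "alpha2 a c s" "alpha2 mb md t"]
    mult_ln_diff_le[of "alpha3 a c s" "alpha3 mb md t"]
    mult_ln_diff_le[of "alpha4 a c s" "alpha4 mb md t"]
    alpha_pos[OF assms(1), of a c] alpha_pos[OF assms(2), of mb md]
    alpha_sum[of a c s] alpha_sum[of mb md t]
  unfolding probit_pair_kl_def expected_pair_loglik_def by linarith

section \<open>Community labels\<close>

lemma comm_row_indicator:
  assumes bin: "\<forall>k<K. Z i k = 0 \<or> Z i k = 1" and sum1: "(\<Sum>k<K. Z i k) = (1 :: real)"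
  shows "comm K Z i < K \<and> (\<forall>k<K. Z i k = of_bool (k = comm K Z i))"
proof -
  let ?S = "{..<K} \<inter> {k. Z i k = 1}"
  have "(\<Sum>k<K. Z i k) = (\<Sum>k<K. if Z i k = 1 then 1 else 0)"
    using bin by (intro sum.cong) auto
  also have "\<dots> = card ?S" by (simp add: sum.If_cases)
  finally obtain k0 where S: "?S = {k0}"
    using sum1 by (auto simp: card_1_singleton_iff)
  then have "comm K Z i = k0"
    unfolding comm_def by (intro the_equality) auto
  with S bin show ?thesis by auto
qed

lemma sum_community_select:
  assumes "\<forall>i<N. \<forall>k<K. Z i k = 0 \<or> Z i k = 1" "\<forall>i<N. (\<Sum>k<K. Z i k) = (1 :: real)" "i < N"
  shows "(\<Sum>k<K. Z i k * g k) = g (comm K Z i)"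
proof -
  have "comm K Z i < K" "\<forall>k<K. Z i k = of_bool (k = comm K Z i)"
    using comm_row_indicator[of K Z i] assms by auto
  then have "(\<Sum>k<K. Z i k * g k) = (\<Sum>k<K. if k = comm K Z i then g k else 0)"
    by (intro sum.cong) auto
  with \<open>comm K Z i < K\<close> show ?thesis by simp
qed

lemma sum_community_pairs:
  assumes "\<forall>i<N. \<forall>k<K. Z i k = 0 \<or> Z i k = 1" "\<forall>i<N. (\<Sum>k<K. Z i k) = (1 :: real)"
  shows "(\<Sum>k<K. \<Sum>l<K. \<Sum>i<N. \<Sum>j\<in>{i<..<N}. Z i k * Z j l * f k l i j)
    = (\<Sum>i<N. \<Sum>j\<in>{i<..<N}. f (comm K Z i) (comm K Z j) i j)"
proof -
  let ?g = "\<lambda>k l i j. Z i k * Z j l * f k l i j"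
  have "(\<Sum>k<K. \<Sum>l<K. \<Sum>i<N. \<Sum>j\<in>{i<..<N}. ?g k l i j)
      = (\<Sum>k<K. \<Sum>i<N. \<Sum>l<K. \<Sum>j\<in>{i<..<N}. ?g k l i j)"
    by (rule sum.cong[OF refl], rule sum.swap)
  also have "\<dots> = (\<Sum>i<N. \<Sum>k<K. \<Sum>j\<in>{i<..<N}. \<Sum>l<K. ?g k l i j)"
    by (subst sum.swap, rule sum.cong[OF refl], rule sum.cong[OF refl], rule sum.swap)
  also have "\<dots> = (\<Sum>i<N. \<Sum>j\<in>{i<..<N}. \<Sum>k<K. Z i k * (\<Sum>l<K. Z j l * f k l i j))"
    by (rule sum.cong[OF refl], subst sum.swap) (simp add: sum_distrib_left mult.assoc)
  also have "\<dots> = (\<Sum>i<N. \<Sum>j\<in>{i<..<N}. f (comm K Z i) (comm K Z j) i j)"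
  proof (intro sum.cong refl)
    fix i j assume "i \<in> {..<N}" "j \<in> {i<..<N}"
    then have "i < N" "j < N" by auto
    then show "(\<Sum>k<K. Z i k * (\<Sum>l<K. Z j l * f k l i j)) = f (comm K Z i) (comm K Z j) i j"
      by (simp add: sum_community_select[OF assms])
  qed
  finally show ?thesis .
qed

section \<open>Excess risk\<close>

lemma Omega_abs_Sig_less_1:
  assumes "Omega N M K cl cu rho D T inv_supp mu Sig Z" "D < 1"
    and "i < N" "j < N" "b < d" "d < M"
  shows "\<bar>Sig b d (comm K Z i) (comm K Z j)\<bar> < 1"
proof -
  have "comm K Z i < K" "comm K Z j < K"
    using assms comm_row_indicator[of K Z i] comm_row_indicator[of K Z j] by (auto simp: Omega_def)
  with assms have "\<bar>Sig b d (comm K Z i) (comm K Z j)\<bar> \<le> D"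
    by (auto simp: Omega_def)
  with \<open>D < 1\<close> show ?thesis by simp
qed

definition expected_Lkl ::
  "nat \<Rightarrow> nat \<Rightarrow> nat \<Rightarrow> (nat \<Rightarrow> nat \<Rightarrow> nat \<Rightarrow> real) \<Rightarrow> (nat \<Rightarrow> nat \<Rightarrow> nat \<Rightarrow> nat \<Rightarrow> real) \<Rightarrow>
    (nat \<Rightarrow> nat \<Rightarrow> real) \<Rightarrow> (nat \<Rightarrow> nat \<Rightarrow> nat \<Rightarrow> real) \<Rightarrow> (nat \<Rightarrow> nat \<Rightarrow> nat \<Rightarrow> nat \<Rightarrow> real) \<Rightarrow>
    (nat \<Rightarrow> nat \<Rightarrow> real) \<Rightarrow> nat \<Rightarrow> nat \<Rightarrow> real" where
  "expected_Lkl N M K mu0 Sig0 Z0 mu Sig Z k l =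
     (\<Sum>i<N. \<Sum>j\<in>{i<..<N}. \<Sum>b<M. \<Sum>d\<in>{b<..<M}. Z i k * Z j l *
        expected_pair_loglik (mu0 b (comm K Z0 i) (comm K Z0 j)) (mu0 d (comm K Z0 i) (comm K Z0 j))
          (Sig0 b d (comm K Z0 i) (comm K Z0 j)) (mu b k l) (mu d k l) (Sig b d k l))"

lemma has_bochner_integral_Lkl:
  assumes P: "prob_space P"
    and noise: "\<And>i j b d. i < j \<Longrightarrow> j < N \<Longrightarrow> b < d \<Longrightarrow> d < M \<Longrightarrow>
      distributed P lborel (\<lambda>w. (eps i j b w, eps i j d w))
        (\<lambda>p. ennreal (binormal_density (Sig0 b d (comm K Z0 i) (comm K Z0 j)) p))"
    and corr: "\<And>i j b d. i < j \<Longrightarrow> j < N \<Longrightarrow> b < d \<Longrightarrow> d < M \<Longrightarrow>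
      \<bar>Sig0 b d (comm K Z0 i) (comm K Z0 j)\<bar> < 1"
  shows "has_bochner_integral P (\<lambda>w. Lkl N M mu Sig Z (Adj K mu0 Z0 eps w) k l)
    (expected_Lkl N M K mu0 Sig0 Z0 mu Sig Z k l)"
proof -
  have Lkl_eq: "Lkl N M mu Sig Z A k l = (\<Sum>i<N. \<Sum>j\<in>{i<..<N}. \<Sum>b<M. \<Sum>d\<in>{b<..<M}.
      Z i k * Z j l * pair_loglik (mu b k l) (mu d k l) (Sig b d k l) (A b i j) (A d i j))" for A
    by (simp add: Lkl_def pair_loglik_def)
  show ?thesis
    unfolding Lkl_eq expected_Lkl_def
  proof (intro has_bochner_integral_sum has_bochner_integral_mult_right)
    fix i j b d assume "i \<in> {..<N}" "j \<in> {i<..<N}" "b \<in> {..<M}" "d \<in> {b<..<M}"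
    then have ijbd: "i < j" "j < N" "b < d" "d < M" by auto
    then show "has_bochner_integral P
      (\<lambda>w. pair_loglik (mu b k l) (mu d k l) (Sig b d k l)
        (Adj K mu0 Z0 eps w b i j) (Adj K mu0 Z0 eps w d i j))
      (expected_pair_loglik (mu0 b (comm K Z0 i) (comm K Z0 j)) (mu0 d (comm K Z0 i) (comm K Z0 j))
        (Sig0 b d (comm K Z0 i) (comm K Z0 j)) (mu b k l) (mu d k l) (Sig b d k l))"
      unfolding Adj_def
      using has_bochner_integral_pair_loglik[OF P corr[OF ijbd] noise[OF ijbd]] by simp
  qed
qed

lemma sum_expected_Lkl:
  assumes "\<forall>i<N. \<forall>k<K. Z i k = 0 \<or> Z i k = 1" "\<forall>i<N. (\<Sum>k<K. Z i k) = 1"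
  shows "(\<Sum>k<K. \<Sum>l<K. expected_Lkl N M K mu0 Sig0 Z0 mu Sig Z k l)
    = (\<Sum>i<N. \<Sum>j\<in>{i<..<N}. \<Sum>b<M. \<Sum>d\<in>{b<..<M}.
        expected_pair_loglik (mu0 b (comm K Z0 i) (comm K Z0 j)) (mu0 d (comm K Z0 i) (comm K Z0 j))
          (Sig0 b d (comm K Z0 i) (comm K Z0 j))
          (mu b (comm K Z i) (comm K Z j)) (mu d (comm K Z i) (comm K Z j))
          (Sig b d (comm K Z i) (comm K Z j)))"
  unfolding expected_Lkl_def sum_distrib_left[symmetric] by (rule sum_community_pairs[OF assms])

lemma excess_eq_sum_probit_pair_kl:
  assumes P: "prob_space P"
    and noise: "\<And>i j b d. i < j \<Longrightarrow> j < N \<Longrightarrow> b < d \<Longrightarrow> d < M \<Longrightarrow>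
      distributed P lborel (\<lambda>w. (eps i j b w, eps i j d w))
        (\<lambda>p. ennreal (binormal_density (Sig0 b d (comm K Z0 i) (comm K Z0 j)) p))"
    and corr: "\<And>i j b d. i < j \<Longrightarrow> j < N \<Longrightarrow> b < d \<Longrightarrow> d < M \<Longrightarrow>
      \<bar>Sig0 b d (comm K Z0 i) (comm K Z0 j)\<bar> < 1"
    and "\<forall>i<N. \<forall>k<K. Z0 i k = 0 \<or> Z0 i k = 1" "\<forall>i<N. (\<Sum>k<K. Z0 i k) = 1"
    and "\<forall>i<N. \<forall>k<K. Z i k = 0 \<or> Z i k = 1" "\<forall>i<N. (\<Sum>k<K. Z i k) = 1"
  shows "excess P N M K eps mu0 Sig0 Z0 mu Sig Z = 1 / (real N ^ 2 * real M ^ 2) *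
    (\<Sum>i<N. \<Sum>j\<in>{i<..<N}. \<Sum>b<M. \<Sum>d\<in>{b<..<M}.
      probit_pair_kl (mu0 b (comm K Z0 i) (comm K Z0 j)) (mu0 d (comm K Z0 i) (comm K Z0 j))
        (Sig0 b d (comm K Z0 i) (comm K Z0 j))
        (mu b (comm K Z i) (comm K Z j)) (mu d (comm K Z i) (comm K Z j))
        (Sig b d (comm K Z i) (comm K Z j)))"
proof -
  let ?E = "expected_Lkl N M K mu0 Sig0 Z0"
  have "has_bochner_integral P (\<lambda>w. Lkl N M mu' Sig' Z' (Adj K mu0 Z0 eps w) k l)
      (?E mu' Sig' Z' k l)"
    for mu' Sig' Z' k l
    using P noise corr by (rule has_bochner_integral_Lkl)
  then have "integral\<^sup>L P (\<lambda>w. Lkl N M mu0 Sig0 Z0 (Adj K mu0 Z0 eps w) k l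
      - Lkl N M mu Sig Z (Adj K mu0 Z0 eps w) k l) = ?E mu0 Sig0 Z0 k l - ?E mu Sig Z k l" for k l
    by (intro has_bochner_integral_integral_eq has_bochner_integral_diff)
  then show ?thesis
    using sum_expected_Lkl[of N K Z0 M mu0 Sig0 Z0 mu0 Sig0]
      sum_expected_Lkl[of N K Z M mu0 Sig0 Z0 mu Sig] assms
    by (simp add: excess_def sum_subtractf probit_pair_kl_def)
qed

theorem lemma1:
  fixes P :: "'w measure"
    and N M K :: nat
    and cl cu rho D :: real
    and T :: "nat \<Rightarrow> nat \<Rightarrow> (nat \<times> nat) set"
    and inv_supp :: "nat \<Rightarrow> nat \<Rightarrow> bool"
    and eps :: "nat \<Rightarrow> nat \<Rightarrow> nat \<Rightarrow> 'w \<Rightarrow> real"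
    and mu0 mu :: "nat \<Rightarrow> nat \<Rightarrow> nat \<Rightarrow> real"
    and Sig0 Sig :: "nat \<Rightarrow> nat \<Rightarrow> nat \<Rightarrow> nat \<Rightarrow> real"
    and Z0 Z :: "nat \<Rightarrow> nat \<Rightarrow> real"
  assumes "prob_space P"
    and "cl < 1" and "1 < cu" and "0 < rho" and "rho < 1" and "D < 1"
    and true_param: "Omega N M K cl cu rho D T inv_supp mu0 Sig0 Z0"
    and noise: "\<And>i j b d. i < j \<Longrightarrow> j < N \<Longrightarrow> b < d \<Longrightarrow> d < M \<Longrightarrow>
      distributed P lborel (\<lambda>w. (eps i j b w, eps i j d w))
        (\<lambda>p. ennreal (binormal_density (Sig0 b d (comm K Z0 i) (comm K Z0 j)) p))"
    and "Omega N M K cl cu rho D T inv_supp mu Sig Z"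
  shows "excess P N M K eps mu0 Sig0 Z0 mu Sig Z \<ge> 0"
proof -
  have corr0: "\<bar>Sig0 b d (comm K Z0 i) (comm K Z0 j)\<bar> < 1"
    and corr: "\<bar>Sig b d (comm K Z i) (comm K Z j)\<bar> < 1"
    if "i < j" "j < N" "b < d" "d < M" for i j b d
    using Omega_abs_Sig_less_1[OF true_param \<open>D < 1\<close>] Omega_abs_Sig_less_1[OF assms(9) \<open>D < 1\<close>] that
    by auto
  have labels: "\<forall>i<N. \<forall>k<K. Z0 i k = 0 \<or> Z0 i k = 1" "\<forall>i<N. (\<Sum>k<K. Z0 i k) = 1"
    "\<forall>i<N. \<forall>k<K. Z i k = 0 \<or> Z i k = 1" "\<forall>i<N. (\<Sum>k<K. Z i k) = 1"
    using true_param assms(9) by (simp_all add: Omega_def)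
  show ?thesis
    by (subst excess_eq_sum_probit_pair_kl[where N = N and M = M and K = K
          and ?Z0.0 = Z0 and ?Sig0.0 = Sig0,
          OF assms(1) noise corr0 labels])
      (auto intro!: divide_nonneg_nonneg sum_nonneg probit_pair_kl_nonneg corr0 corr)
qed

end
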